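(* Let $G=(V,E)$ be a finite undirected graph with $|V|=n$, and let $G^{\ell}$ be the directed graph on $V$ obtained by replacing every edge $\{u,v\}\in E$ by the two arcs $u\to v$ and $v\to u$. Then for every linear ordering $\varphi$ of $V$, $$\mathrm{VS}(G,\varphi)\le \mathrm{RB}(G^{\ell},\varphi)\le \mathrm{VS}(G,\varphi)+1 .$$
   Context: A linear ordering of a finite vertex set $V$ with $|V|=n$ is a bijection $\varphi:\{1,\dots,n\}\to V$; write $\mathrm{pos}(u)=\varphi^{-1}(u)$. For an undirected graph $G=(V,E)$, the vertex separation value is $\mathrm{VS}(G,\varphi)=\max_{1\le i\le n}\left|\{u\in V:\exists\{u,v\}\in E \text{ with } \mathrm{pos}(u)\le i<\mathrm{pos}(v)\}\right|$. For a directed graph $D=(V,A)$ (a labeled dependency graph; an arc $u\to w$ means object $u$ depends on object $w$, i.e. $w$ must leave its start pose before $u$ can be placed at its goal), the running buffer count of $\varphi$ is defined by the following process: objects are picked in the order $\varphi(1),\varphi(2),\dots$; let $S_i=\{\varphi(1),\dots,\varphi(i)\}$ ($S_0=\emptyset$) and $B_i=\{u\in S_i:\exists\, (u\to w)\in A \text{ with } w\notin S_i\}$ (objects stored in an external buffer after step $i$, all others in $S_i$ having been placed at their goals at the earliest opportunity). Then $\mathrm{RB}(D,\varphi)=\max_{1\le i\le n}\big(|B_{i-1}|+[\varphi(i)\in B_i]\big)$, where $[\cdot]$ is $1$ if the condition holds and $0$ otherwise (when $\varphi(i)$ must itself go to the buffer, it is stored there before the objects it releases can leave the buffer). *)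

theory Defs
  imports Main
begin

definition ugraph :: "'a set \<Rightarrow> 'a set set \<Rightarrow> bool" where
  "ugraph V E \<longleftrightarrow> finite V \<and> (\<forall>e\<in>E. e \<subseteq> V \<and> card e = 2)"

definition linear_ordering :: "'a set \<Rightarrow> (nat \<Rightarrow> 'a) \<Rightarrow> bool" where
  "linear_ordering V \<phi> \<longleftrightarrow> bij_betw \<phi> {1..card V} V"

definition pos :: "'a set \<Rightarrow> (nat \<Rightarrow> 'a) \<Rightarrow> 'a \<Rightarrow> nat" where
  "pos V \<phi> u = inv_into {1..card V} \<phi> u"

definition VS :: "'a set \<Rightarrow> 'a set set \<Rightarrow> (nat \<Rightarrow> 'a) \<Rightarrow> nat" where
  "VS V E \<phi> = Max ((\<lambda>i. card {u \<in> V. \<exists>v. {u, v} \<in> E \<and> pos V \<phi> u \<le> i \<and> i < pos V \<phi> v})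
                    ` {1..card V})"

definition S_set :: "(nat \<Rightarrow> 'a) \<Rightarrow> nat \<Rightarrow> 'a set" where
  "S_set \<phi> i = \<phi> ` {1..i}"

definition B_set :: "('a \<times> 'a) set \<Rightarrow> (nat \<Rightarrow> 'a) \<Rightarrow> nat \<Rightarrow> 'a set" where
  "B_set A \<phi> i = {u \<in> S_set \<phi> i. \<exists>w. (u, w) \<in> A \<and> w \<notin> S_set \<phi> i}"

definition RB :: "'a set \<Rightarrow> ('a \<times> 'a) set \<Rightarrow> (nat \<Rightarrow> 'a) \<Rightarrow> nat" where
  "RB V A \<phi> = Max ((\<lambda>i. card (B_set A \<phi> (i - 1)) + (if \<phi> i \<in> B_set A \<phi> i then 1 else 0))
                    ` {1..card V})"

definition bidirect :: "'a set set \<Rightarrow> ('a \<times> 'a) set" where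
  "bidirect E = {(u, v). {u, v} \<in> E}"

end

theory Submission
  imports Defs
begin

text \<open>
  When every dependency is symmetric, an object stays in the buffer exactly as long as
  one of its neighbours is still unpicked, so the buffer \<open>B\<^sub>i\<close> after step \<open>i\<close> is the
  vertex separation cut at \<open>i\<close>. Since \<open>B\<^sub>i \<subseteq> B\<^sub>i\<^sub>-\<^sub>1 \<union> {\<phi> i}\<close>, the \<open>i\<close>-th term of the
  running buffer count lies between \<open>|B\<^sub>i|\<close> and \<open>|B\<^sub>i\<^sub>-\<^sub>1| + 1\<close>; taking maxima over \<open>i\<close>
  gives both inequalities.
\<close>

lemma pos_in_range:
  assumes "linear_ordering V \<phi>" "u \<in> V"
  shows "pos V \<phi> u \<in> {1..card V}"
  using assms unfolding linear_ordering_def pos_def bij_betw_def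
  by (metis inv_into_into)

lemma linear_ordering_pos:
  assumes "linear_ordering V \<phi>" "u \<in> V"
  shows "\<phi> (pos V \<phi> u) = u"
  using assms unfolding linear_ordering_def pos_def bij_betw_def
  by (metis f_inv_into_f)

lemma pos_linear_ordering:
  assumes "linear_ordering V \<phi>" "k \<in> {1..card V}"
  shows "pos V \<phi> (\<phi> k) = k"
  using assms unfolding linear_ordering_def pos_def bij_betw_def
  by (simp add: inv_into_f_f)

lemma S_set_eq:
  assumes "linear_ordering V \<phi>" "i \<le> card V"
  shows "S_set \<phi> i = {u \<in> V. pos V \<phi> u \<le> i}"
proof
  show "S_set \<phi> i \<subseteq> {u \<in> V. pos V \<phi> u \<le> i}"
  proof
    fix u assume "u \<in> S_set \<phi> i"
    then obtain k where k: "k \<in> {1..i}" "u = \<phi> k" by (auto simp: S_set_def)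
    with assms(2) have "k \<in> {1..card V}" by auto
    with assms(1) k show "u \<in> {u \<in> V. pos V \<phi> u \<le> i}"
      using pos_linear_ordering[OF assms(1) \<open>k \<in> {1..card V}\<close>]
      by (auto simp: linear_ordering_def bij_betw_def)
  qed
  show "{u \<in> V. pos V \<phi> u \<le> i} \<subseteq> S_set \<phi> i"
    using pos_in_range[OF assms(1)] linear_ordering_pos[OF assms(1)]
    unfolding S_set_def by (metis (no_types, lifting) atLeastAtMost_iff image_eqI mem_Collect_eq subsetI)
qed

lemma B_set_bidirect_eq:
  assumes "ugraph V E" "linear_ordering V \<phi>" "i \<le> card V"
  shows "B_set (bidirect E) \<phi> i =
           {u \<in> V. \<exists>v. {u, v} \<in> E \<and> pos V \<phi> u \<le> i \<and> i < pos V \<phi> v}"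
proof -
  have "{u, v} \<in> E \<Longrightarrow> u \<in> V \<and> v \<in> V" for u v
    using assms(1) unfolding ugraph_def by auto
  then show ?thesis
    unfolding B_set_def bidirect_def S_set_eq[OF assms(2,3)] by (auto simp: not_le)
qed

lemma VS_eq_Max_card_B_set:
  assumes "ugraph V E" "linear_ordering V \<phi>"
  shows "VS V E \<phi> = Max ((\<lambda>i. card (B_set (bidirect E) \<phi> i)) ` {1..card V})"
  unfolding VS_def using B_set_bidirect_eq[OF assms] by (intro arg_cong[where f = Max] image_cong) auto

lemma finite_B_set: "finite (B_set A \<phi> i)"
  unfolding B_set_def S_set_def by auto

lemma B_set_0 [simp]: "B_set A \<phi> 0 = {}"
  unfolding B_set_def S_set_def by auto

lemma card_B_set_Suc_le:
  "card (B_set A \<phi> (Suc i)) \<le> card (B_set A \<phi> i) + (if \<phi> (Suc i) \<in> B_set A \<phi> (Suc i) then 1 else 0)"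
proof -
  have "S_set \<phi> (Suc i) = insert (\<phi> (Suc i)) (S_set \<phi> i)"
    unfolding S_set_def by (simp add: atLeastAtMostSuc_conv)
  then have "B_set A \<phi> (Suc i) \<subseteq> B_set A \<phi> i \<union> (B_set A \<phi> (Suc i) \<inter> {\<phi> (Suc i)})"
    unfolding B_set_def by auto
  then have "card (B_set A \<phi> (Suc i)) \<le> card (B_set A \<phi> i \<union> (B_set A \<phi> (Suc i) \<inter> {\<phi> (Suc i)}))"
    by (rule card_mono[rotated]) (simp add: finite_B_set)
  also have "\<dots> \<le> card (B_set A \<phi> i) + card (B_set A \<phi> (Suc i) \<inter> {\<phi> (Suc i)})"
    by (rule card_Un_le)
  finally show ?thesis by auto
qed

theorem lemma1:
  fixes V :: "'a set" and E :: "'a set set" and \<phi> :: "nat \<Rightarrow> 'a"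
  assumes "ugraph V E"
    and "linear_ordering V \<phi>"
  shows "VS V E \<phi> \<le> RB V (bidirect E) \<phi> \<and> RB V (bidirect E) \<phi> \<le> VS V E \<phi> + 1"
proof -
  define B where "B = B_set (bidirect E) \<phi>"
  define step where "step i = card (B (i - 1)) + (if \<phi> i \<in> B i then 1 else 0)" for i
  have VS: "VS V E \<phi> = Max ((\<lambda>i. card (B i)) ` {1..card V})"
    unfolding B_def by (rule VS_eq_Max_card_B_set[OF assms])
  have RB: "RB V (bidirect E) \<phi> = Max (step ` {1..card V})"
    unfolding RB_def step_def B_def ..
  have lower: "card (B i) \<le> step i" if "i \<in> {1..card V}" for i
    using that card_B_set_Suc_le[of "bidirect E" \<phi> "i - 1"] unfolding step_def B_def by auto
  have upper: "step i \<le> VS V E \<phi> + 1" if "i \<in> {1..card V}" for i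
  proof -
    have "card (B (i - 1)) \<le> VS V E \<phi>"
    proof (cases "i = 1")
      case False
      with that have "i - 1 \<in> {1..card V}" by auto
      then show ?thesis unfolding VS by (intro Max_ge) auto
    qed (simp add: B_def)
    then show ?thesis unfolding step_def by auto
  qed
  show ?thesis
  proof (cases "card V = 0")
    case True
    \<comment> \<open>both maxima are the unspecified value \<open>Max {}\<close>\<close>
    then show ?thesis unfolding VS RB by simp
  next
    case False
    then have "{1..card V} \<noteq> {}" by auto
    then show ?thesis unfolding RB
      using lower upper unfolding VS by (auto simp: Max_le_iff intro: le_trans[OF lower Max_ge])
  qed
qed

end
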